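(* Let $K$ be a field of any characteristic and let $I_A\subset K[x_1,\ldots,x_n]$ be a toric ideal of height $r\ge 2$. If $I_A$ is a set-theoretic complete intersection on binomials, then $I_A$ is radical splittable.
   Context: $A=\{{\bf a}_1,\ldots,{\bf a}_n\}\subset\mathbb{Z}^m$ is a vector configuration with $\ker_{\mathbb{Z}}(A)\cap\mathbb{N}^n=\{{\bf 0}\}$, where $\ker_{\mathbb{Z}}(A)=\{{\bf u}\in\mathbb{Z}^n\mid\sum u_i{\bf a}_i={\bf 0}\}$; $I_A$ is the kernel of $K[x_1,\ldots,x_n]\to K[t_1^{\pm1},\ldots,t_m^{\pm1}]$, $x_i\mapsto{\bf t}^{{\bf a}_i}$. The height of $I_A$ equals $\dim_{\mathbb{Q}}\ker_{\mathbb{Q}}(A)$. The binomial arithmetical rank $\mathrm{bar}(I_A)$ is the smallest $t$ such that there exist binomials $B_1,\ldots,B_t\in I_A$ with $I_A=\mathrm{rad}(B_1,\ldots,B_t)$; $I_A$ is a set-theoretic complete intersection on binomials if $\mathrm{bar}(I_A)=\mathrm{ht}(I_A)$. $I_A$ is radical splittable if there exist toric ideals $I_{A_1},I_{A_2}\subset K[x_1,\ldots,x_n]$ with $I_A=\mathrm{rad}(I_{A_1}+I_{A_2})$ and $I_{A_i}\ne I_A$ for $i=1,2$. *)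

theory Defs
  imports Complex_Main "HOL-Library.Poly_Mapping" "HOL-Library.Function_Algebras"
begin

text \<open>Polynomial ring K[x_i | i in 'n] with 'n a finite type (n = CARD('n)):
  polynomials are finitely supported maps from exponent vectors ('n =>0 nat) to K.\<close>

type_synonym ('n, 'k) mpoly = "('n \<Rightarrow>\<^sub>0 nat) \<Rightarrow>\<^sub>0 'k"

text \<open>A vector configuration A = {a_1,...,a_n} in Z^m is given as a map
  A :: 'n => 'c => int  (A i = a_i, coordinates indexed by 'c).
  The degree of an exponent vector u is A u = sum_i u_i a_i.\<close>

definition cfg_deg :: "('n::finite \<Rightarrow> 'c \<Rightarrow> int) \<Rightarrow> ('n \<Rightarrow>\<^sub>0 nat) \<Rightarrow> ('c \<Rightarrow> int)" where
  "cfg_deg A u = (\<lambda>j. \<Sum>i\<in>UNIV. int (Poly_Mapping.lookup u i) * A i j)"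

text \<open>Toric ideal I_A: kernel of the K-algebra map x_i |-> t^(a_i) into the
  Laurent polynomial ring; the image of f has coefficient of t^w equal to the
  sum of the coefficients of f at exponents u with A u = w.\<close>

definition toric_ideal :: "('n::finite \<Rightarrow> 'c \<Rightarrow> int) \<Rightarrow> ('n, 'k::field) mpoly set" where
  "toric_ideal A = {f. \<forall>w. (\<Sum>u\<in>{u \<in> Poly_Mapping.keys f. cfg_deg A u = w}. Poly_Mapping.lookup f u) = 0}"

definition pointed_cfg :: "('n::finite \<Rightarrow> 'c \<Rightarrow> int) \<Rightarrow> bool" where
  "pointed_cfg A \<longleftrightarrow> (\<forall>u::'n \<Rightarrow> nat. (\<forall>j. (\<Sum>i\<in>UNIV. int (u i) * A i j) = 0) \<longrightarrow> (\<forall>i. u i = 0))"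

text \<open>Height of I_A, which equals dim_Q ker_Q(A).\<close>

definition toric_height :: "('n::finite \<Rightarrow> 'c \<Rightarrow> int) \<Rightarrow> nat" where
  "toric_height A =
     vector_space.dim (\<lambda>(c::rat) (x::'n \<Rightarrow> rat) i. c * x i)
       {x :: 'n \<Rightarrow> rat. \<forall>j. (\<Sum>i\<in>UNIV. x i * of_int (A i j)) = 0}"

definition monom :: "('n \<Rightarrow>\<^sub>0 nat) \<Rightarrow> ('n, 'k::field) mpoly" where
  "monom u = Poly_Mapping.single u 1"

definition is_binomial :: "('n, 'k::field) mpoly \<Rightarrow> bool" where
  "is_binomial f \<longleftrightarrow> (\<exists>u v. f = monom u - monom v)"

definition gen_ideal :: "'a::comm_ring_1 set \<Rightarrow> 'a set" where
  "gen_ideal S = {f. \<exists>F c. finite F \<and> F \<subseteq> S \<and> f = (\<Sum>s\<in>F. c s * s)}"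

definition rad :: "'a::comm_ring_1 set \<Rightarrow> 'a set" where
  "rad I = {f. \<exists>k::nat. f ^ k \<in> I}"

definition bar :: "('n, 'k::field) mpoly set \<Rightarrow> nat" where
  "bar I = (LEAST t. \<exists>Bs. length Bs = t \<and> (\<forall>B\<in>set Bs. is_binomial B \<and> B \<in> I)
                            \<and> I = rad (gen_ideal (set Bs)))"

definition stci_binomials :: "('n::finite \<Rightarrow> 'c \<Rightarrow> int) \<Rightarrow> 'k::field itself \<Rightarrow> bool" where
  "stci_binomials A _ \<longleftrightarrow> bar (toric_ideal A :: ('n, 'k) mpoly set) = toric_height A"

text \<open>Radical splittable: toric ideals I_{A_1}, I_{A_2} (A_i subset Z^{m_i}, encoded as
  maps 'n => nat => int vanishing at coordinates >= m_i).\<close>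

definition radical_splittable :: "('n::finite, 'k::field) mpoly set \<Rightarrow> bool" where
  "radical_splittable I \<longleftrightarrow>
     (\<exists>(A1 :: 'n \<Rightarrow> nat \<Rightarrow> int) (A2 :: 'n \<Rightarrow> nat \<Rightarrow> int) m1 m2.
        (\<forall>i j. m1 \<le> j \<longrightarrow> A1 i j = 0) \<and> (\<forall>i j. m2 \<le> j \<longrightarrow> A2 i j = 0) \<and>
        I = rad {f + g | f g. f \<in> toric_ideal A1 \<and> g \<in> toric_ideal A2} \<and>
        toric_ideal A1 \<noteq> I \<and> toric_ideal A2 \<noteq> I)"

end

theory Submission
  imports Defs
begin

(*
  Write I_A = rad(B_1, ..., B_r) with binomials B_i = x^(u_i) - x^(v_i), where r = ht I_A.
  For fewer than r binomials of I_A the differences u_i - v_i cannot span ker_Q(A), so some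
  integral linear form d vanishes on them but not on some w in ker_Z(A). Appending d to A as a
  new coordinate gives a configuration A' whose toric ideal contains those binomials but not
  x^(w+) - x^(w-), hence is strictly smaller than I_A. Doing this for {B_1} and for
  {B_2, ..., B_r} yields A_1, A_2 with (B_1, ..., B_r) inside I_(A_1) + I_(A_2) inside I_A, and
  I_A = rad(I_(A_1) + I_(A_2)) because toric ideals are radical.

  That bar(I_A) is attained by some list of binomials at all rests on I_A being generated by
  finitely many binomials (the minimal ones, by Dickson's lemma).
*)

section \<open>Ideals\<close>

definition is_ideal :: "'a::comm_ring_1 set \<Rightarrow> bool" where
  "is_ideal J \<longleftrightarrow> 0 \<in> J \<and> (\<forall>x\<in>J. \<forall>y\<in>J. x + y \<in> J) \<and> (\<forall>a. \<forall>x\<in>J. a * x \<in> J)"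

lemma is_ideal_zero: "is_ideal J \<Longrightarrow> 0 \<in> J"
  by (simp add: is_ideal_def)

lemma is_ideal_add: "is_ideal J \<Longrightarrow> x \<in> J \<Longrightarrow> y \<in> J \<Longrightarrow> x + y \<in> J"
  by (simp add: is_ideal_def)

lemma is_ideal_mult: "is_ideal J \<Longrightarrow> x \<in> J \<Longrightarrow> a * x \<in> J"
  by (simp add: is_ideal_def)

lemma gen_ideal_subset: "S \<subseteq> gen_ideal S"
proof
  fix s assume "s \<in> S"
  then show "s \<in> gen_ideal S"
    unfolding gen_ideal_def by (intro CollectI exI[of _ "{s}"] exI[of _ "\<lambda>_. 1"]) simp
qed

lemma is_ideal_gen_ideal: "is_ideal (gen_ideal S)"
  unfolding is_ideal_def
proof (intro conjI ballI allI)
  show "0 \<in> gen_ideal S"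
    unfolding gen_ideal_def by (intro CollectI exI[of _ "{}"]) simp
next
  fix x y assume "x \<in> gen_ideal S" "y \<in> gen_ideal S"
  then obtain F c G e where F: "finite F" "F \<subseteq> S" "x = (\<Sum>s\<in>F. c s * s)"
    and G: "finite G" "G \<subseteq> S" "y = (\<Sum>s\<in>G. e s * s)"
    unfolding gen_ideal_def by blast
  have extend: "(\<Sum>s\<in>H. b s * s) = (\<Sum>s\<in>F \<union> G. (if s \<in> H then b s else 0) * s)"
    if "H \<subseteq> F \<union> G" for H b
    by (rule sum.mono_neutral_cong_left) (use F G that in auto)
  have "x = (\<Sum>s\<in>F \<union> G. (if s \<in> F then c s else 0) * s)"
    unfolding F(3) by (rule extend) simp
  moreover have "y = (\<Sum>s\<in>F \<union> G. (if s \<in> G then e s else 0) * s)"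
    unfolding G(3) by (rule extend) simp
  ultimately have "x + y = (\<Sum>s\<in>F \<union> G. ((if s \<in> F then c s else 0) + (if s \<in> G then e s else 0)) * s)"
    by (simp add: distrib_right sum.distrib)
  then show "x + y \<in> gen_ideal S"
    unfolding gen_ideal_def using F G
    by (intro CollectI exI[of _ "F \<union> G"] exI[of _ "\<lambda>s. (if s \<in> F then c s else 0) + (if s \<in> G then e s else 0)"])
      simp
next
  fix a x assume "x \<in> gen_ideal S"
  then obtain F c where F: "finite F" "F \<subseteq> S" "x = (\<Sum>s\<in>F. c s * s)"
    unfolding gen_ideal_def by blast
  then have "a * x = (\<Sum>s\<in>F. (a * c s) * s)"
    by (simp add: sum_distrib_left mult.assoc)
  then show "a * x \<in> gen_ideal S"
    unfolding gen_ideal_def using F by (intro CollectI exI[of _ F] exI[of _ "\<lambda>s. a * c s"]) simp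
qed

lemma gen_ideal_least:
  assumes "is_ideal J" "S \<subseteq> J"
  shows "gen_ideal S \<subseteq> J"
proof
  fix f assume "f \<in> gen_ideal S"
  then obtain F c where F: "finite F" "F \<subseteq> S" "f = (\<Sum>s\<in>F. c s * s)"
    unfolding gen_ideal_def by blast
  have "(\<Sum>s\<in>F. c s * s) \<in> J" using F(1,2)
    by (induction F rule: finite_induct) (use assms in \<open>auto simp: is_ideal_def\<close>)
  then show "f \<in> J" using F(3) by simp
qed

lemma rad_mono: "I \<subseteq> J \<Longrightarrow> rad I \<subseteq> rad J"
  unfolding rad_def by blast

definition ideal_sum :: "'a::comm_ring_1 set \<Rightarrow> 'a set \<Rightarrow> 'a set" where
  "ideal_sum I J = {f + g | f g. f \<in> I \<and> g \<in> J}"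

lemma is_ideal_ideal_sum:
  assumes I: "is_ideal I" and J: "is_ideal J"
  shows "is_ideal (ideal_sum I J)"
  unfolding is_ideal_def
proof (intro conjI ballI allI)
  show "0 \<in> ideal_sum I J"
    using is_ideal_zero[OF I] is_ideal_zero[OF J] unfolding ideal_sum_def by force
next
  fix x y assume "x \<in> ideal_sum I J" "y \<in> ideal_sum I J"
  then obtain f g f' g' where "x = f + g" "y = f' + g'" "f \<in> I" "g \<in> J" "f' \<in> I" "g' \<in> J"
    unfolding ideal_sum_def by blast
  moreover have "f + g + (f' + g') = (f + f') + (g + g')" by (simp add: algebra_simps)
  ultimately show "x + y \<in> ideal_sum I J"
    using is_ideal_add[OF I] is_ideal_add[OF J] unfolding ideal_sum_def by blast
next
  fix a x assume "x \<in> ideal_sum I J"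
  then obtain f g where "x = f + g" "f \<in> I" "g \<in> J"
    unfolding ideal_sum_def by blast
  moreover have "a * (f + g) = a * f + a * g" by (simp add: algebra_simps)
  ultimately show "a * x \<in> ideal_sum I J"
    using is_ideal_mult[OF I] is_ideal_mult[OF J] unfolding ideal_sum_def by blast
qed

lemma Un_subset_ideal_sum:
  assumes "is_ideal I" "is_ideal J"
  shows "I \<union> J \<subseteq> ideal_sum I J"
proof
  fix x assume "x \<in> I \<union> J"
  then have "x = x + 0 \<and> x \<in> I \<and> 0 \<in> J \<or> x = 0 + x \<and> 0 \<in> I \<and> x \<in> J"
    using is_ideal_zero[OF assms(1)] is_ideal_zero[OF assms(2)] by auto
  then show "x \<in> ideal_sum I J"
    unfolding ideal_sum_def by blast
qed

lemma ideal_sum_least: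
  assumes "is_ideal K" "I \<subseteq> K" "J \<subseteq> K"
  shows "ideal_sum I J \<subseteq> K"
  using assms unfolding ideal_sum_def by (auto intro: is_ideal_add)

lemma radical_eq_rad_ideal_sum:
  assumes "is_ideal I\<^sub>1" "is_ideal I\<^sub>2" "is_ideal I" "I\<^sub>1 \<subseteq> I" "I\<^sub>2 \<subseteq> I" "rad I = I"
    and "I = rad (gen_ideal S)" "S \<subseteq> I\<^sub>1 \<union> I\<^sub>2"
  shows "I = rad (ideal_sum I\<^sub>1 I\<^sub>2)"
proof -
  have "gen_ideal S \<subseteq> ideal_sum I\<^sub>1 I\<^sub>2"
    using assms(8) Un_subset_ideal_sum[OF assms(1,2)]
    by (intro gen_ideal_least is_ideal_ideal_sum assms(1,2)) blast
  then have "I \<subseteq> rad (ideal_sum I\<^sub>1 I\<^sub>2)"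
    unfolding assms(7) by (rule rad_mono)
  moreover have "rad (ideal_sum I\<^sub>1 I\<^sub>2) \<subseteq> rad I"
    using assms(3-5) by (intro rad_mono ideal_sum_least)
  ultimately show ?thesis
    using assms(6) by blast
qed

section \<open>Monomial maps\<close>

(* The K-linear extension of x^u |-> t^(d u) into the monoid algebra K['b]. *)
definition pushforward :: "('a \<Rightarrow> 'b) \<Rightarrow> ('a \<Rightarrow>\<^sub>0 'k::comm_monoid_add) \<Rightarrow> 'b \<Rightarrow>\<^sub>0 'k" where
  "pushforward d f = (\<Sum>u\<in>Poly_Mapping.keys f. Poly_Mapping.single (d u) (Poly_Mapping.lookup f u))"

lemma lookup_pushforward:
  "Poly_Mapping.lookup (pushforward d f) w = (\<Sum>u | u \<in> Poly_Mapping.keys f \<and> d u = w. Poly_Mapping.lookup f u)"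
  unfolding pushforward_def lookup_sum lookup_single
  by (simp add: sum.inter_filter[symmetric] when_def eq_commute)

lemma pushforward_zero [simp]: "pushforward d 0 = 0"
  by (simp add: pushforward_def)

lemma pushforward_single [simp]: "pushforward d (Poly_Mapping.single a c) = Poly_Mapping.single (d a) c"
  by (simp add: pushforward_def)

lemma pushforward_add: "pushforward d (f + g) = pushforward d f + pushforward d g"
  unfolding pushforward_def by (rule setsum_keys_plus_distrib) (simp_all add: single_add)

lemma pushforward_sum: "pushforward d (sum F S) = (\<Sum>s\<in>S. pushforward d (F s))"
  by (induction S rule: infinite_finite_induct) (simp_all add: pushforward_add)

lemma pushforward_diff:
  "pushforward d (f - g :: 'a \<Rightarrow>\<^sub>0 'k::ab_group_add) = pushforward d f - pushforward d g"
  by (metis add_diff_cancel diff_add_cancel pushforward_add)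

lemma pushforward_comp: "pushforward (g \<circ> d) f = pushforward g (pushforward d f)"
  by (simp add: pushforward_def[of d] pushforward_sum) (simp add: pushforward_def)

lemma sum_single_lookup: "(\<Sum>u\<in>Poly_Mapping.keys f. Poly_Mapping.single u (Poly_Mapping.lookup f u)) = f"
proof (rule poly_mapping_eqI)
  fix k
  show "Poly_Mapping.lookup (\<Sum>u\<in>Poly_Mapping.keys f. Poly_Mapping.single u (Poly_Mapping.lookup f u)) k
        = Poly_Mapping.lookup f k"
    unfolding lookup_sum lookup_single
    by (cases "k \<in> Poly_Mapping.keys f") (auto simp: when_def in_keys_iff)
qed

lemma pushforward_mult:
  fixes f g :: "'a::monoid_add \<Rightarrow>\<^sub>0 'k::comm_semiring_0" and d :: "'a \<Rightarrow> 'b::monoid_add"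
  assumes "\<And>a b. d (a + b) = d a + d b"
  shows "pushforward d (f * g) = pushforward d f * pushforward d g"
proof -
  have "f * g = (\<Sum>u\<in>Poly_Mapping.keys f. Poly_Mapping.single u (Poly_Mapping.lookup f u)) *
       (\<Sum>v\<in>Poly_Mapping.keys g. Poly_Mapping.single v (Poly_Mapping.lookup g v))"
    by (simp add: sum_single_lookup)
  also have "\<dots> = (\<Sum>u\<in>Poly_Mapping.keys f. \<Sum>v\<in>Poly_Mapping.keys g.
       Poly_Mapping.single (u + v) (Poly_Mapping.lookup f u * Poly_Mapping.lookup g v))"
    by (simp add: sum_product mult_single)
  finally have "pushforward d (f * g) = (\<Sum>u\<in>Poly_Mapping.keys f. \<Sum>v\<in>Poly_Mapping.keys g.
       Poly_Mapping.single (d u + d v) (Poly_Mapping.lookup f u * Poly_Mapping.lookup g v))"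
    by (simp add: pushforward_sum assms)
  also have "\<dots> = pushforward d f * pushforward d g"
    unfolding pushforward_def by (simp add: sum_product mult_single)
  finally show ?thesis .
qed

lemma pushforward_power:
  fixes f :: "'a::monoid_add \<Rightarrow>\<^sub>0 'k::comm_semiring_1" and d :: "'a \<Rightarrow> 'b::monoid_add"
  assumes "\<And>a b. d (a + b) = d a + d b" "d 0 = 0"
  shows "pushforward d (f ^ k) = pushforward d f ^ k"
proof (induction k)
  case 0
  show ?case using pushforward_single[of d 0 "1::'k"] by (simp add: assms(2) del: pushforward_single)
next
  case (Suc k)
  then show ?case by (simp add: pushforward_mult[OF assms(1)])
qed

lemma pushforward_eq_0_if_fibers_refine:
  assumes "\<And>u v. d u = d v \<Longrightarrow> e u = e v" and "pushforward d f = 0"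
  shows "pushforward e f = 0"
proof -
  have "e = (e \<circ> inv d) \<circ> d"
    by (auto simp: fun_eq_iff intro!: assms(1) simp: f_inv_into_f)
  then show ?thesis by (metis assms(2) pushforward_comp pushforward_zero)
qed

lemma pushforward_eq_0_iff_if_same_fibers:
  assumes "\<And>u v. d u = d v \<longleftrightarrow> e u = e v"
  shows "pushforward d f = 0 \<longleftrightarrow> pushforward e f = 0"
  using pushforward_eq_0_if_fibers_refine[of d e f] pushforward_eq_0_if_fibers_refine[of e d f] assms
  by blast

lemma monom_add: "(monom (u + v) :: ('n, 'k::field) mpoly) = monom u * monom v"
  by (simp add: monom_def mult_single)

lemma pushforward_monom_diff_eq_0_iff:
  "pushforward d (monom u - monom v :: ('n, 'k::field) mpoly) = 0 \<longleftrightarrow> d u = d v"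
proof -
  have "pushforward d (monom u - monom v :: ('n, 'k) mpoly)
      = Poly_Mapping.single (d u) 1 - Poly_Mapping.single (d v) 1"
    by (simp add: monom_def pushforward_diff)
  moreover have "Poly_Mapping.single (d u) (1::'k) = Poly_Mapping.single (d v) 1 \<longleftrightarrow> d u = d v"
    by (metis lookup_single_eq lookup_single_not_eq one_neq_zero)
  ultimately show ?thesis by simp
qed

lemma is_ideal_pushforward_kernel:
  fixes d :: "('n \<Rightarrow>\<^sub>0 nat) \<Rightarrow> 'g::monoid_add"
  assumes "\<And>a b. d (a + b) = d a + d b"
  shows "is_ideal {f :: ('n, 'k::field) mpoly. pushforward d f = 0}"
  by (simp add: is_ideal_def pushforward_add pushforward_mult[OF assms])

(* K['g] has no zero divisors when 'g is linearly ordered. *)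
lemma pushforward_kernel_radical:
  fixes d :: "('n \<Rightarrow>\<^sub>0 nat) \<Rightarrow> 'g::{ordered_cancel_comm_monoid_add, linorder}"
    and f :: "('n, 'k::field) mpoly"
  assumes "\<And>a b. d (a + b) = d a + d b" and "pushforward d (f ^ k) = 0"
  shows "pushforward d f = 0"
proof -
  have "d 0 = 0" using assms(1)[of 0 0] add_left_cancel[of "d 0" "d 0" 0] by simp
  then show ?thesis using assms by (simp add: pushforward_power)
qed

(* Every fibre of d has coefficient sum 0, so the term of f at u can be moved onto another
   monomial v of the same fibre at the cost of a multiple of x^u - x^v; this shrinks the support. *)
lemma pushforward_kernel_subset_binomial_ideal:
  fixes d :: "('n \<Rightarrow>\<^sub>0 nat) \<Rightarrow> 'g" and f :: "('n, 'k::field) mpoly"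
  assumes "pushforward d f = 0"
  shows "f \<in> gen_ideal {monom u - monom v | u v. d u = d v}"
  using assms
proof (induction "card (Poly_Mapping.keys f)" arbitrary: f rule: less_induct)
  case less
  let ?J = "gen_ideal {monom u - monom v :: ('n, 'k) mpoly | u v. d u = d v}"
  have J: "is_ideal ?J" by (rule is_ideal_gen_ideal)
  show ?case
  proof (cases "f = 0")
    case True
    then show ?thesis using is_ideal_zero[OF J] by simp
  next
    case False
    then obtain u where u: "u \<in> Poly_Mapping.keys f"
      using keys_eq_empty by blast
    have fiber_sum: "(\<Sum>w | w \<in> Poly_Mapping.keys f \<and> d w = d u. Poly_Mapping.lookup f w) = 0"
      using less.prems lookup_pushforward[of d f "d u"] by simp
    have "\<exists>v \<in> Poly_Mapping.keys f. v \<noteq> u \<and> d v = d u"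
    proof (rule ccontr)
      assume "\<not> ?thesis"
      then have "{w. w \<in> Poly_Mapping.keys f \<and> d w = d u} = {u}" using u by auto
      then show False using fiber_sum u by (simp add: in_keys_iff)
    qed
    then obtain v where v: "v \<in> Poly_Mapping.keys f" "v \<noteq> u" "d v = d u" by blast
    define c where "c = Poly_Mapping.lookup f u"
    define g where "g = f - Poly_Mapping.single u c + Poly_Mapping.single v c"
    have f_eq: "f = g + Poly_Mapping.single 0 c * (monom u - monom v)"
      by (simp add: g_def monom_def mult_single right_diff_distrib)
    have "Poly_Mapping.keys g \<subseteq> Poly_Mapping.keys f - {u}"
      using v by (auto simp: g_def c_def in_keys_iff lookup_add lookup_minus lookup_single when_def split: if_splits)
    then have "card (Poly_Mapping.keys g) \<le> card (Poly_Mapping.keys f - {u})"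
      by (simp add: card_mono)
    also have "\<dots> < card (Poly_Mapping.keys f)"
      using u by (rule card_Diff1_less[OF finite_keys])
    finally have "card (Poly_Mapping.keys g) < card (Poly_Mapping.keys f)" .
    moreover have "pushforward d g = 0"
      using less.prems v(3) by (simp add: g_def pushforward_add pushforward_diff)
    ultimately have "g \<in> ?J" using less.hyps by blast
    moreover have "monom u - monom v \<in> ?J"
      using v(3) by (intro subsetD[OF gen_ideal_subset] CollectI exI[of _ u] exI[of _ v]) simp
    ultimately show ?thesis
      unfolding f_eq using J by (intro is_ideal_add is_ideal_mult)
  qed
qed

section \<open>Toric ideals\<close>

lemma toric_ideal_eq_kernel: "toric_ideal A = {f. pushforward (cfg_deg A) f = 0}"
  by (auto simp: toric_ideal_def poly_mapping_eq_iff fun_eq_iff lookup_pushforward)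

lemma cfg_deg_add: "cfg_deg A (u + v) = cfg_deg A u + cfg_deg A v"
  by (simp add: cfg_deg_def fun_eq_iff lookup_add distrib_right sum.distrib)

lemma is_ideal_toric_ideal: "is_ideal (toric_ideal A)"
  unfolding toric_ideal_eq_kernel by (rule is_ideal_pushforward_kernel) (rule cfg_deg_add)

lemma monom_diff_in_toric_ideal_iff:
  "(monom u - monom v :: ('n::finite, 'k::field) mpoly) \<in> toric_ideal A \<longleftrightarrow> cfg_deg A u = cfg_deg A v"
  by (simp add: toric_ideal_eq_kernel pushforward_monom_diff_eq_0_iff)

lemma toric_ideal_mono:
  assumes "\<And>u v. cfg_deg B u = cfg_deg B v \<Longrightarrow> cfg_deg A u = cfg_deg A v"
  shows "toric_ideal B \<subseteq> toric_ideal A"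
  using pushforward_eq_0_if_fibers_refine[OF assms] by (auto simp: toric_ideal_eq_kernel)

definition lin_form :: "('n::finite \<Rightarrow> int) \<Rightarrow> ('n \<Rightarrow>\<^sub>0 nat) \<Rightarrow> int" where
  "lin_form c u = (\<Sum>i\<in>UNIV. int (Poly_Mapping.lookup u i) * c i)"

lemma cfg_deg_eq_lin_form: "cfg_deg A u j = lin_form (\<lambda>i. A i j) u"
  by (simp add: cfg_deg_def lin_form_def)

lemma nat_cfg_append_row:
  fixes A :: "'n::finite \<Rightarrow> 'm::finite \<Rightarrow> int" and c :: "'n \<Rightarrow> int"
  obtains A' :: "'n \<Rightarrow> nat \<Rightarrow> int" and m where "\<forall>i j. m \<le> j \<longrightarrow> A' i j = 0"
    and "\<And>u v. cfg_deg A' u = cfg_deg A' v \<longleftrightarrow> cfg_deg A u = cfg_deg A v \<and> lin_form c u = lin_form c v"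
proof -
  obtain f0 :: "'m \<Rightarrow> nat" and N where f0: "f0 ` UNIV = {i. i < N}" "inj f0"
    using finite_imp_inj_to_nat_seg[of "UNIV :: 'm set"] by auto
  define A' where "A' i j = (if j < N then A i (inv f0 j) else if j = N then c i else 0)" for i j
  have deg: "cfg_deg A' u j = (if j < N then cfg_deg A u (inv f0 j) else if j = N then lin_form c u else 0)"
    for u j
    by (simp add: cfg_deg_def lin_form_def A'_def)
  have "cfg_deg A u = cfg_deg A v \<longleftrightarrow> (\<forall>j<N. cfg_deg A u (inv f0 j) = cfg_deg A v (inv f0 j))"
    for u v
  proof
    assume "\<forall>j<N. cfg_deg A u (inv f0 j) = cfg_deg A v (inv f0 j)"
    moreover have "f0 x < N" "inv f0 (f0 x) = x" for x
      using f0 by auto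
    ultimately show "cfg_deg A u = cfg_deg A v" by (metis ext)
  qed simp
  then have "cfg_deg A' u = cfg_deg A' v \<longleftrightarrow> cfg_deg A u = cfg_deg A v \<and> lin_form c u = lin_form c v"
    for u v
    unfolding fun_eq_iff[of "cfg_deg A' u"] deg by (auto split: if_splits)
  moreover have "\<forall>i j. Suc N \<le> j \<longrightarrow> A' i j = 0" by (simp add: A'_def)
  ultimately show ?thesis using that by blast
qed

lemma toric_ideal_radical:
  fixes A :: "'n::finite \<Rightarrow> 'm::finite \<Rightarrow> int" and f :: "('n, 'k::field) mpoly"
  assumes "f ^ k \<in> toric_ideal A"
  shows "f \<in> toric_ideal A"
proof -
  obtain m and A' :: "'n \<Rightarrow> nat \<Rightarrow> int" where bounded: "\<forall>i j. m \<le> j \<longrightarrow> A' i j = 0"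
    and fibers: "\<And>u v. cfg_deg A' u = cfg_deg A' v \<longleftrightarrow>
                         cfg_deg A u = cfg_deg A v \<and> lin_form (\<lambda>_. 0) u = lin_form (\<lambda>_. 0) v"
    using nat_cfg_append_row[of A "\<lambda>_. 0"] by metis
  \<comment> \<open>the degrees of \<open>A'\<close> have finite support, so they live in the ordered group \<open>nat \<Rightarrow>\<^sub>0 int\<close>\<close>
  define d where "d u = Abs_poly_mapping (cfg_deg A' u)" for u
  have lookup_d: "Poly_Mapping.lookup (d u) = cfg_deg A' u" for u
  proof -
    have "{j. cfg_deg A' u j \<noteq> 0} \<subseteq> {..<m}"
      using bounded by (auto simp: cfg_deg_def) (rule ccontr, simp add: not_less)
    then show ?thesis unfolding d_def by (simp add: Abs_poly_mapping_inverse finite_subset)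
  qed
  have d_add: "d (a + b) = d a + d b" for a b
    by (rule poly_mapping_eqI) (simp add: lookup_d lookup_add cfg_deg_add)
  have "d u = d v \<longleftrightarrow> cfg_deg A u = cfg_deg A v" for u v
    using fibers[of u v] lookup_d[of u] lookup_d[of v] by (auto simp: lin_form_def poly_mapping.lookup_inject[symmetric])
  then have "toric_ideal A = {f :: ('n, 'k) mpoly. pushforward d f = 0}"
    unfolding toric_ideal_eq_kernel using pushforward_eq_0_iff_if_same_fibers by blast
  then show ?thesis using assms pushforward_kernel_radical[OF d_add] by auto
qed

lemma rad_toric_ideal:
  fixes A :: "'n::finite \<Rightarrow> 'm::finite \<Rightarrow> int"
  shows "rad (toric_ideal A :: ('n, 'k::field) mpoly set) = toric_ideal A"
proof
  show "rad (toric_ideal A) \<subseteq> toric_ideal A"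
    unfolding rad_def by (auto intro: toric_ideal_radical)
  show "toric_ideal A \<subseteq> rad (toric_ideal A)"
    unfolding rad_def by (auto intro: exI[of _ 1])
qed

section \<open>Dickson's lemma\<close>

lemma nat_seq_incseq_subseq:
  fixes s :: "nat \<Rightarrow> nat"
  shows "\<exists>\<phi>. strict_mono \<phi> \<and> incseq (s \<circ> \<phi>)"
proof -
  obtain \<phi> :: "nat \<Rightarrow> nat" where \<phi>: "strict_mono \<phi>" "monoseq (s \<circ> \<phi>)"
    using seq_monosub[of s] by (auto simp: comp_def)
  show ?thesis
  proof (cases "incseq (s \<circ> \<phi>)")
    case True
    with \<phi>(1) show ?thesis by blast
  next
    case False
    then have dec: "decseq (s \<circ> \<phi>)" using \<phi>(2) by (simp add: monoseq_iff)
    obtain N where N: "\<And>k. s (\<phi> N) \<le> s (\<phi> k)"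
      using ex_has_least_nat[of "\<lambda>_. True" 0 "s \<circ> \<phi>"] by auto
    \<comment> \<open>a non-increasing sequence of naturals is constant from its minimum on\<close>
    have "s (\<phi> (k + N)) = s (\<phi> N)" for k
      using N[of "k + N"] dec by (simp add: decseq_def le_antisym)
    then have "incseq (s \<circ> (\<lambda>k. \<phi> (k + N)))"
      by (simp add: incseq_def)
    moreover have "strict_mono (\<lambda>k. \<phi> (k + N))"
      using \<phi>(1) by (simp add: strict_mono_def)
    ultimately show ?thesis by blast
  qed
qed

lemma incseq_subseq_finite_coords:
  fixes s :: "nat \<Rightarrow> 'a \<Rightarrow> nat"
  assumes "finite C"
  shows "\<exists>\<phi>. strict_mono \<phi> \<and> (\<forall>i\<in>C. incseq (\<lambda>k. s (\<phi> k) i))"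
  using assms
proof (induction C rule: finite_induct)
  case empty
  show ?case using strict_mono_id by blast
next
  case (insert x C)
  then obtain \<phi> where \<phi>: "strict_mono \<phi>" "\<forall>i\<in>C. incseq (\<lambda>k. s (\<phi> k) i)"
    by blast
  obtain \<psi> where \<psi>: "strict_mono \<psi>" "incseq ((\<lambda>k. s (\<phi> k) x) \<circ> \<psi>)"
    using nat_seq_incseq_subseq by blast
  have "strict_mono (\<phi> \<circ> \<psi>)"
    using \<phi>(1) \<psi>(1) by (simp add: strict_mono_def)
  moreover have "incseq (\<lambda>k. s ((\<phi> \<circ> \<psi>) k) i)" if "i \<in> C" for i
    using \<phi>(2) that \<psi>(1) by (auto simp: incseq_def strict_mono_less_eq)
  ultimately show ?case using \<psi>(2) by (auto simp: comp_def)
qed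

lemma dickson_fun:
  fixes s :: "nat \<Rightarrow> 'a::finite \<Rightarrow> nat"
  obtains i j where "i < j" "s i \<le> s j"
proof -
  obtain \<phi> where \<phi>: "strict_mono \<phi>" "\<forall>i. incseq (\<lambda>k. s (\<phi> k) i)"
    using incseq_subseq_finite_coords[of UNIV s] by auto
  then have "s (\<phi> 0) \<le> s (\<phi> 1)"
    by (simp add: le_fun_def incseq_def)
  moreover have "\<phi> 0 < \<phi> 1"
    using \<phi>(1) by (simp add: strict_mono_def)
  ultimately show ?thesis using that by blast
qed

lemma finite_minimal_fun:
  fixes P :: "('a::finite \<Rightarrow> nat) set"
  shows "finite {x \<in> P. \<forall>y\<in>P. y \<le> x \<longrightarrow> y = x}"
proof (rule ccontr)
  let ?M = "{x \<in> P. \<forall>y\<in>P. y \<le> x \<longrightarrow> y = x}"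
  assume "infinite ?M"
  then obtain s :: "nat \<Rightarrow> _" where s: "inj s" "range s \<subseteq> ?M"
    using infinite_countable_subset by blast
  obtain i j where "i < j" "s i \<le> s j" by (rule dickson_fun)
  moreover have "s i \<in> P" "s j \<in> ?M" using s(2) by auto
  ultimately show False using s(1) by (auto dest: injD)
qed

lemma sum_strict_mono_fun:
  fixes x y :: "'a::finite \<Rightarrow> nat"
  assumes "x < y"
  shows "sum x UNIV < sum y UNIV"
proof -
  have "\<not> y \<le> x" using assms by (simp add: less_fun_def)
  then obtain i where "\<not> y i \<le> x i" by (auto simp: le_fun_def)
  then have "x i < y i" by simp
  moreover have "x j \<le> y j" for j
    using assms by (simp add: le_funD less_imp_le)
  ultimately show ?thesis
    by (intro sum_strict_mono_ex1) auto
qed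

lemma exists_minimal_below_fun:
  fixes P :: "('a::finite \<Rightarrow> nat) set"
  assumes "x \<in> P"
  shows "\<exists>y\<in>P. y \<le> x \<and> (\<forall>z\<in>P. z \<le> y \<longrightarrow> z = y)"
  using assms
proof (induction "sum x UNIV" arbitrary: x rule: less_induct)
  case less
  show ?case
  proof (cases "\<forall>z\<in>P. z \<le> x \<longrightarrow> z = x")
    case True
    then show ?thesis using less.prems by blast
  next
    case False
    then obtain z where z: "z \<in> P" "z < x" by (auto simp: less_le)
    then obtain y where "y \<in> P" "y \<le> z" "\<forall>w\<in>P. w \<le> y \<longrightarrow> w = y"
      using less.hyps sum_strict_mono_fun by blast
    then show ?thesis using z(2) by (meson order.trans less_imp_le)
  qed
qed

section \<open>Finite binomial generation\<close>

(* Exponent pairs of binomials as vectors in N^(n+n) with the componentwise order, to which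
   Dickson's lemma applies. *)
definition exponent_pair_fun :: "('n \<Rightarrow>\<^sub>0 nat) \<times> ('n \<Rightarrow>\<^sub>0 nat) \<Rightarrow> 'n + 'n \<Rightarrow> nat" where
  "exponent_pair_fun p = case_sum (Poly_Mapping.lookup (fst p)) (Poly_Mapping.lookup (snd p))"

lemma inj_exponent_pair_fun: "inj exponent_pair_fun"
proof (rule injI)
  fix p q :: "('n \<Rightarrow>\<^sub>0 nat) \<times> ('n \<Rightarrow>\<^sub>0 nat)"
  assume eq: "exponent_pair_fun p = exponent_pair_fun q"
  have "Poly_Mapping.lookup (fst p) i = Poly_Mapping.lookup (fst q) i"
    "Poly_Mapping.lookup (snd p) i = Poly_Mapping.lookup (snd q) i" for i
    using fun_cong[OF eq, of "Inl i"] fun_cong[OF eq, of "Inr i"]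
    by (simp_all add: exponent_pair_fun_def)
  then show "p = q" by (simp add: prod_eq_iff poly_mapping_eqI)
qed

lemma exponent_pair_fun_le_iff:
  "exponent_pair_fun (a, b) \<le> exponent_pair_fun (c, e) \<longleftrightarrow>
     (\<forall>i. Poly_Mapping.lookup a i \<le> Poly_Mapping.lookup c i \<and> Poly_Mapping.lookup b i \<le> Poly_Mapping.lookup e i)"
  by (auto simp: exponent_pair_fun_def le_fun_def split: sum.split)

definition fiber_pairs :: "('n::finite \<Rightarrow> 'c \<Rightarrow> int) \<Rightarrow> (('n \<Rightarrow>\<^sub>0 nat) \<times> ('n \<Rightarrow>\<^sub>0 nat)) set" where
  "fiber_pairs A = {(u, v). cfg_deg A u = cfg_deg A v \<and> u \<noteq> v}"

definition minimal_fiber_pairs :: "('n::finite \<Rightarrow> 'c \<Rightarrow> int) \<Rightarrow> (('n \<Rightarrow>\<^sub>0 nat) \<times> ('n \<Rightarrow>\<^sub>0 nat)) set" where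
  "minimal_fiber_pairs A = {p \<in> fiber_pairs A.
     \<forall>q\<in>fiber_pairs A. exponent_pair_fun q \<le> exponent_pair_fun p \<longrightarrow> q = p}"

lemma finite_minimal_fiber_pairs: "finite (minimal_fiber_pairs A)"
proof -
  let ?E = "exponent_pair_fun ` fiber_pairs A"
  have "minimal_fiber_pairs A \<subseteq> exponent_pair_fun -` {x \<in> ?E. \<forall>y\<in>?E. y \<le> x \<longrightarrow> y = x}"
    by (auto simp: minimal_fiber_pairs_def)
  moreover have "finite (exponent_pair_fun -` {x \<in> ?E. \<forall>y\<in>?E. y \<le> x \<longrightarrow> y = x})"
    by (rule finite_vimageI[OF finite_minimal_fun inj_exponent_pair_fun])
  ultimately show ?thesis by (rule finite_subset)
qed

lemma exists_minimal_fiber_pair_below: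
  assumes "p \<in> fiber_pairs A"
  shows "\<exists>q\<in>minimal_fiber_pairs A. exponent_pair_fun q \<le> exponent_pair_fun p"
proof -
  let ?E = "exponent_pair_fun ` fiber_pairs A"
  obtain y where y: "y \<in> ?E" "y \<le> exponent_pair_fun p" "\<forall>z\<in>?E. z \<le> y \<longrightarrow> z = y"
    using exists_minimal_below_fun[of "exponent_pair_fun p" ?E] assms by blast
  then obtain q where q: "q \<in> fiber_pairs A" "y = exponent_pair_fun q" by blast
  have "q \<in> minimal_fiber_pairs A"
    using q y(3) inj_exponent_pair_fun by (auto simp: minimal_fiber_pairs_def dest: injD)
  then show ?thesis using q(2) y(2) by blast
qed

lemma minimal_fiber_pair_factor:
  assumes "(u, v) \<in> fiber_pairs A"
  obtains u' v' u'' v'' where "(u', v') \<in> minimal_fiber_pairs A" "u = u' + u''" "v = v' + v''"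
    "cfg_deg A u'' = cfg_deg A v''" "exponent_pair_fun (u'', v'') < exponent_pair_fun (u, v)"
proof -
  obtain q where "q \<in> minimal_fiber_pairs A" "exponent_pair_fun q \<le> exponent_pair_fun (u, v)"
    using exists_minimal_fiber_pair_below[OF assms] by blast
  moreover obtain u' v' where "q = (u', v')" by (cases q)
  ultimately have min: "(u', v') \<in> minimal_fiber_pairs A"
    and below: "exponent_pair_fun (u', v') \<le> exponent_pair_fun (u, v)"
    by simp_all
  have deg': "cfg_deg A u' = cfg_deg A v'" "u' \<noteq> v'"
    using min by (auto simp: minimal_fiber_pairs_def fiber_pairs_def)
  have le: "Poly_Mapping.lookup u' i \<le> Poly_Mapping.lookup u i"
    "Poly_Mapping.lookup v' i \<le> Poly_Mapping.lookup v i" for i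
    using below by (auto simp: exponent_pair_fun_le_iff)
  define u'' where "u'' = u - u'"
  define v'' where "v'' = v - v'"
  have u_split: "u = u' + u''" and v_split: "v = v' + v''"
    unfolding u''_def v''_def by (auto intro!: poly_mapping_eqI simp: lookup_add lookup_minus le)
  have "cfg_deg A u = cfg_deg A v"
    using assms by (simp add: fiber_pairs_def)
  then have "cfg_deg A u'' = cfg_deg A v''"
    using deg'(1) unfolding u_split v_split cfg_deg_add by simp
  moreover have "exponent_pair_fun (u'', v'') < exponent_pair_fun (u, v)"
  proof -
    have "exponent_pair_fun (u'', v'') \<le> exponent_pair_fun (u, v)"
      by (simp add: exponent_pair_fun_le_iff u''_def v''_def lookup_minus)
    moreover have "(u'', v'') \<noteq> (u, v)"
    proof
      assume "(u'', v'') = (u, v)"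
      then have "u' + u = 0 + u" "v' + v = 0 + v"
        using u_split v_split by simp_all
      then show False using deg'(2) by (simp only: add_right_cancel) simp
    qed
    ultimately show ?thesis using inj_exponent_pair_fun by (auto simp: less_le dest: injD)
  qed
  ultimately show ?thesis using that min u_split v_split by blast
qed

lemma monom_diff_in_minimal_binomial_ideal:
  fixes A :: "'n::finite \<Rightarrow> 'c \<Rightarrow> int"
  assumes "cfg_deg A u = cfg_deg A v"
  shows "(monom u - monom v :: ('n, 'k::field) mpoly)
           \<in> gen_ideal ((\<lambda>(u, v). monom u - monom v) ` minimal_fiber_pairs A)"
  using assms
proof (induction "sum (exponent_pair_fun (u, v)) UNIV" arbitrary: u v rule: less_induct)
  case less
  let ?J = "gen_ideal ((\<lambda>(u, v). monom u - monom v :: ('n, 'k) mpoly) ` minimal_fiber_pairs A)"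
  have J: "is_ideal ?J" by (rule is_ideal_gen_ideal)
  show ?case
  proof (cases "u = v")
    case True
    then show ?thesis using is_ideal_zero[OF J] by simp
  next
    case False
    then have "(u, v) \<in> fiber_pairs A" using less.prems by (simp add: fiber_pairs_def)
    then obtain u' v' u'' v'' where min: "(u', v') \<in> minimal_fiber_pairs A"
      and split: "u = u' + u''" "v = v' + v''" and deg: "cfg_deg A u'' = cfg_deg A v''"
      and smaller: "exponent_pair_fun (u'', v'') < exponent_pair_fun (u, v)"
      by (rule minimal_fiber_pair_factor)
    have "monom u'' - monom v'' \<in> ?J"
      using smaller by (rule less.hyps[OF sum_strict_mono_fun deg])
    moreover have "monom u' - monom v' \<in> ?J"
      using min by (intro subsetD[OF gen_ideal_subset]) (auto intro: rev_image_eqI)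
    ultimately have "monom u'' * (monom u' - monom v') + monom v' * (monom u'' - monom v'') \<in> ?J"
      using J by (intro is_ideal_add is_ideal_mult)
    moreover have "(monom u - monom v :: ('n, 'k) mpoly)
        = monom u'' * (monom u' - monom v') + monom v' * (monom u'' - monom v'')"
      unfolding split monom_add by (simp add: algebra_simps)
    ultimately show ?thesis by simp
  qed
qed

lemma toric_ideal_eq_gen_ideal_minimal_binomials:
  fixes A :: "'n::finite \<Rightarrow> 'c \<Rightarrow> int"
  shows "(toric_ideal A :: ('n, 'k::field) mpoly set)
           = gen_ideal ((\<lambda>(u, v). monom u - monom v) ` minimal_fiber_pairs A)"
    (is "_ = ?J")
proof
  have "{monom u - monom v :: ('n, 'k) mpoly | u v. cfg_deg A u = cfg_deg A v} \<subseteq> ?J"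
    by (auto intro: monom_diff_in_minimal_binomial_ideal)
  then have "gen_ideal {monom u - monom v :: ('n, 'k) mpoly | u v. cfg_deg A u = cfg_deg A v} \<subseteq> ?J"
    by (rule gen_ideal_least[OF is_ideal_gen_ideal])
  moreover have "toric_ideal A \<subseteq> gen_ideal {monom u - monom v :: ('n, 'k) mpoly | u v. cfg_deg A u = cfg_deg A v}"
    unfolding toric_ideal_eq_kernel by (auto intro: pushforward_kernel_subset_binomial_ideal)
  ultimately show "toric_ideal A \<subseteq> ?J" by (rule order.trans[rotated])
  show "?J \<subseteq> toric_ideal A"
    by (rule gen_ideal_least[OF is_ideal_toric_ideal])
      (auto simp: minimal_fiber_pairs_def fiber_pairs_def monom_diff_in_toric_ideal_iff)
qed

lemma exists_binomial_list_at_bar: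
  fixes A :: "'n::finite \<Rightarrow> 'm::finite \<Rightarrow> int"
  defines "I \<equiv> toric_ideal A :: ('n, 'k::field) mpoly set"
  obtains Bs where "length Bs = bar I" "\<forall>B\<in>set Bs. is_binomial B \<and> B \<in> I" "I = rad (gen_ideal (set Bs))"
proof -
  have fin: "finite ((\<lambda>(u, v). monom u - monom v :: ('n, 'k) mpoly) ` minimal_fiber_pairs A)"
    by (rule finite_imageI[OF finite_minimal_fiber_pairs])
  obtain Bs where Bs: "set Bs = (\<lambda>(u, v). monom u - monom v :: ('n, 'k) mpoly) ` minimal_fiber_pairs A"
    using finite_list[OF fin] by blast
  have I_eq: "I = gen_ideal (set Bs)"
    unfolding I_def Bs by (rule toric_ideal_eq_gen_ideal_minimal_binomials)
  have "rad I = I"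
    unfolding I_def by (rule rad_toric_ideal)
  with I_eq have "I = rad (gen_ideal (set Bs))"
    by simp
  moreover have "\<forall>B\<in>set Bs. is_binomial B"
    unfolding Bs by (auto simp: is_binomial_def)
  moreover have "set Bs \<subseteq> I"
    unfolding I_eq by (rule gen_ideal_subset)
  ultimately have "\<exists>t Bs. length Bs = t \<and> (\<forall>B\<in>set Bs. is_binomial B \<and> B \<in> I) \<and> I = rad (gen_ideal (set Bs))"
    by blast
  from LeastI_ex[OF this] obtain Bs where
    "length Bs = bar I" "\<forall>B\<in>set Bs. is_binomial B \<and> B \<in> I" "I = rad (gen_ideal (set Bs))"
    unfolding bar_def by blast
  then show ?thesis by (rule that)
qed

section \<open>Proper toric subideals\<close>

abbreviation scale_rat_fun :: "rat \<Rightarrow> ('n \<Rightarrow> rat) \<Rightarrow> 'n \<Rightarrow> rat" where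
  "scale_rat_fun \<equiv> \<lambda>c x i. c * x i"

lemma vector_space_rat_fun: "vector_space scale_rat_fun"
  by unfold_locales (simp_all add: fun_eq_iff algebra_simps)

lemma sum_fun_apply: "sum F S x = (\<Sum>s\<in>S. F s x)"
  by (induction S rule: infinite_finite_induct) simp_all

lemma linear_rat_fun_eq_dot:
  fixes f :: "('n::finite \<Rightarrow> rat) \<Rightarrow> rat"
  assumes "Vector_Spaces.linear scale_rat_fun (*) f"
  shows "f y = (\<Sum>i\<in>UNIV. f (\<lambda>j. if j = i then 1 else 0) * y i)"
proof -
  interpret L: Vector_Spaces.linear "scale_rat_fun :: rat \<Rightarrow> ('n \<Rightarrow> rat) \<Rightarrow> 'n \<Rightarrow> rat" "(*)" f
    by (rule assms)
  have "y = (\<Sum>i\<in>UNIV. scale_rat_fun (y i) (\<lambda>j. if j = i then 1 else 0))"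
    by (simp add: fun_eq_iff sum_fun_apply if_distrib[of "(*) _"] cong: if_cong)
  then have "f y = (\<Sum>i\<in>UNIV. f (scale_rat_fun (y i) (\<lambda>j. if j = i then 1 else 0)))"
    by (metis L.sum)
  then show ?thesis by (simp add: L.scale mult.commute)
qed

lemma exists_separating_functional:
  fixes U :: "('n::finite \<Rightarrow> rat) set"
  assumes "x \<notin> module.span scale_rat_fun U"
  shows "\<exists>c. (\<forall>u\<in>U. (\<Sum>i\<in>UNIV. c i * u i) = 0) \<and> (\<Sum>i\<in>UNIV. c i * x i) \<noteq> 0"
proof -
  interpret V: vector_space "scale_rat_fun :: rat \<Rightarrow> ('n \<Rightarrow> rat) \<Rightarrow> 'n \<Rightarrow> rat"
    by (rule vector_space_rat_fun)
  interpret VP: vector_space_pair "scale_rat_fun :: rat \<Rightarrow> ('n \<Rightarrow> rat) \<Rightarrow> 'n \<Rightarrow> rat" "(*) :: rat \<Rightarrow> rat \<Rightarrow> rat"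
    by (intro vector_space_pair.intro vector_space_rat_fun, unfold_locales) (simp_all add: algebra_simps)
  obtain B where B: "B \<subseteq> U" "V.independent B" "U \<subseteq> V.span B"
    using V.maximal_independent_subset[of U] by blast
  have x: "x \<notin> V.span B" using assms B(1) V.span_mono by blast
  then have indep: "V.independent (insert x B)" using B(2) by (rule V.independent_insertI)
  have "x \<notin> B" using x V.span_base by blast
  define f where "f = VP.construct (insert x B) (\<lambda>y. if y = x then (1::rat) else 0)"
  have lin: "Vector_Spaces.linear scale_rat_fun (*) f"
    unfolding f_def by (rule VP.linear_construct[OF indep])
  interpret L: Vector_Spaces.linear "scale_rat_fun :: rat \<Rightarrow> ('n \<Rightarrow> rat) \<Rightarrow> 'n \<Rightarrow> rat" "(*)" f
    by (rule lin)
  define c where "c i = f (\<lambda>j. if j = i then 1 else 0)" for i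
  have dot: "f y = (\<Sum>i\<in>UNIV. c i * y i)" for y
    unfolding c_def by (rule linear_rat_fun_eq_dot[OF lin])
  have "f x = 1"
    unfolding f_def by (subst VP.construct_basis[OF indep]) auto
  moreover have "f b = 0" if "b \<in> B" for b
    unfolding f_def using that \<open>x \<notin> B\<close> by (subst VP.construct_basis[OF indep]) auto
  then have "f u = 0" if "u \<in> U" for u
    using L.eq_0_on_span[of B u] B(3) that by blast
  ultimately show ?thesis
    unfolding dot by (intro exI[of _ c]) auto
qed

lemma rat_fun_common_denominator:
  fixes c :: "'n::finite \<Rightarrow> rat"
  obtains N :: int and d :: "'n \<Rightarrow> int" where "N > 0" "\<And>i. of_int (d i) = of_int N * c i"
proof -
  define p where "p i = fst (quotient_of (c i))" for i
  define q where "q i = snd (quotient_of (c i))" for i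
  have c: "c i = of_int (p i) / of_int (q i)" for i
    unfolding p_def q_def by (rule quotient_of_div) simp
  have q_pos: "q i > 0" for i
    unfolding q_def by (rule quotient_of_denom_pos[of "c i" "p i"]) (simp add: p_def)
  define N where "N = (\<Prod>i\<in>UNIV. q i)"
  have scaled: "of_int (p i * (\<Prod>j\<in>UNIV - {i}. q j)) = of_int N * c i" for i
  proof -
    have "N = q i * (\<Prod>j\<in>UNIV - {i}. q j)"
      unfolding N_def by (simp add: prod.remove)
    then show ?thesis
      using q_pos[of i] by (simp add: c field_simps)
  qed
  have "N > 0"
    unfolding N_def using q_pos by (simp add: prod_pos)
  then show ?thesis using scaled by (rule that)
qed

lemma exists_integral_separating_pair:
  fixes A :: "'n::finite \<Rightarrow> 'm::finite \<Rightarrow> int" and U :: "('n \<Rightarrow> rat) set"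
  assumes "finite U" "card U < toric_height A"
  obtains d w :: "'n \<Rightarrow> int" where "\<And>u. u \<in> U \<Longrightarrow> (\<Sum>i\<in>UNIV. of_int (d i) * u i) = 0"
    and "\<And>j. (\<Sum>i\<in>UNIV. w i * A i j) = 0" and "(\<Sum>i\<in>UNIV. d i * w i) \<noteq> 0"
proof -
  interpret V: vector_space "scale_rat_fun :: rat \<Rightarrow> ('n \<Rightarrow> rat) \<Rightarrow> 'n \<Rightarrow> rat"
    by (rule vector_space_rat_fun)
  let ?K = "{x :: 'n \<Rightarrow> rat. \<forall>j. (\<Sum>i\<in>UNIV. x i * of_int (A i j)) = 0}"
  have "\<not> ?K \<subseteq> V.span U"
  proof
    assume "?K \<subseteq> V.span U"
    then have "toric_height A \<le> card U"
      unfolding toric_height_def by (rule V.dim_le_card) (rule assms(1))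
    then show False using assms(2) by simp
  qed
  then obtain x where x: "x \<in> ?K" "x \<notin> V.span U" by blast
  obtain c where c: "\<forall>u\<in>U. (\<Sum>i\<in>UNIV. c i * u i) = 0" "(\<Sum>i\<in>UNIV. c i * x i) \<noteq> 0"
    using exists_separating_functional[OF x(2)] by blast
  obtain N :: int and d where N: "N > 0" "\<And>i. of_int (d i) = of_int N * c i"
    using rat_fun_common_denominator[of c] by blast
  obtain M :: int and w where M: "M > 0" "\<And>i. of_int (w i) = of_int M * x i"
    using rat_fun_common_denominator[of x] by blast
  have "(\<Sum>i\<in>UNIV. of_int (d i) * u i) = 0" if "u \<in> U" for u
  proof -
    have "(\<Sum>i\<in>UNIV. of_int (d i) * u i) = of_int N * (\<Sum>i\<in>UNIV. c i * u i)"
      by (simp add: N(2) sum_distrib_left mult.assoc)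
    then show ?thesis using c(1) that by simp
  qed
  moreover have "(\<Sum>i\<in>UNIV. w i * A i j) = 0" for j
  proof -
    have "(of_int (\<Sum>i\<in>UNIV. w i * A i j) :: rat) = of_int M * (\<Sum>i\<in>UNIV. x i * of_int (A i j))"
      by (simp add: M(2) sum_distrib_left mult.assoc)
    also have "\<dots> = 0" using x(1) by simp
    finally show ?thesis by (simp only: of_int_eq_0_iff)
  qed
  moreover have "(\<Sum>i\<in>UNIV. d i * w i) \<noteq> 0"
  proof -
    have "(of_int (\<Sum>i\<in>UNIV. d i * w i) :: rat) = of_int N * of_int M * (\<Sum>i\<in>UNIV. c i * x i)"
      by (simp add: N(2) M(2) sum_distrib_left algebra_simps)
    also have "\<dots> \<noteq> 0" using c(2) N(1) M(1) by simp
    finally show ?thesis by (metis of_int_0)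
  qed
  ultimately show ?thesis by (rule that)
qed

(* The positive part w+ of w; the negative part w- is pos_exp (- w). *)
definition pos_exp :: "('n::finite \<Rightarrow> int) \<Rightarrow> 'n \<Rightarrow>\<^sub>0 nat" where
  "pos_exp w = Abs_poly_mapping (\<lambda>i. nat (w i))"

lemma lookup_pos_exp: "Poly_Mapping.lookup (pos_exp w) i = nat (w i)"
  unfolding pos_exp_def by (simp add: Abs_poly_mapping_inverse)

lemma lin_form_pos_exp_diff:
  "lin_form c (pos_exp w) - lin_form c (pos_exp (- w)) = (\<Sum>i\<in>UNIV. w i * c i)"
proof -
  have "int (nat (w i)) * c i - int (nat (- w i)) * c i = w i * c i" for i
    by (simp add: left_diff_distrib[symmetric])
  then show ?thesis by (simp add: lin_form_def lookup_pos_exp sum_subtractf[symmetric])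
qed

definition exp_diff :: "('n \<Rightarrow>\<^sub>0 nat) \<Rightarrow> ('n \<Rightarrow>\<^sub>0 nat) \<Rightarrow> 'n \<Rightarrow> rat" where
  "exp_diff u v i = of_nat (Poly_Mapping.lookup u i) - of_nat (Poly_Mapping.lookup v i)"

lemma sum_mult_exp_diff:
  "(\<Sum>i\<in>UNIV. of_int (d i) * exp_diff u v i) = of_int (lin_form d u - lin_form d v)"
  by (simp add: exp_diff_def lin_form_def sum_subtractf[symmetric] algebra_simps)

lemma toric_ideal_append_row_neq:
  fixes A :: "'n::finite \<Rightarrow> 'c \<Rightarrow> int" and A' :: "'n \<Rightarrow> 'c' \<Rightarrow> int"
  assumes fibers: "\<And>u v. cfg_deg A' u = cfg_deg A' v \<longleftrightarrow> cfg_deg A u = cfg_deg A v \<and> lin_form d u = lin_form d v"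
    and "\<And>j. (\<Sum>i\<in>UNIV. w i * A i j) = 0" and "(\<Sum>i\<in>UNIV. d i * w i) \<noteq> 0"
  shows "(toric_ideal A' :: ('n, 'k::field) mpoly set) \<noteq> toric_ideal A"
proof -
  have "cfg_deg A (pos_exp w) = cfg_deg A (pos_exp (- w))"
  proof
    fix j
    have "cfg_deg A (pos_exp w) j - cfg_deg A (pos_exp (- w)) j = (\<Sum>i\<in>UNIV. w i * A i j)"
      by (simp add: cfg_deg_eq_lin_form lin_form_pos_exp_diff)
    then show "cfg_deg A (pos_exp w) j = cfg_deg A (pos_exp (- w)) j" using assms(2) by simp
  qed
  moreover have "lin_form d (pos_exp w) \<noteq> lin_form d (pos_exp (- w))"
    using lin_form_pos_exp_diff[of d w] assms(3) by (simp add: mult.commute)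
  ultimately have "(monom (pos_exp w) - monom (pos_exp (- w)) :: ('n, 'k) mpoly) \<in> toric_ideal A - toric_ideal A'"
    by (simp add: monom_diff_in_toric_ideal_iff fibers)
  then show ?thesis by blast
qed

lemma exists_proper_toric_subideal:
  fixes A :: "'n::finite \<Rightarrow> 'm::finite \<Rightarrow> int" and G :: "('n, 'k::field) mpoly set"
  assumes "finite G" "card G < toric_height A" "\<forall>B\<in>G. is_binomial B \<and> B \<in> toric_ideal A"
  shows "\<exists>(A' :: 'n \<Rightarrow> nat \<Rightarrow> int) m. (\<forall>i j. m \<le> j \<longrightarrow> A' i j = 0) \<and>
           toric_ideal A' \<subseteq> toric_ideal A \<and> toric_ideal A' \<noteq> toric_ideal A \<and> G \<subseteq> toric_ideal A'"
proof -
  have "\<forall>B\<in>G. \<exists>p. B = monom (fst p) - monom (snd p)"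
    using assms(3) by (auto simp: is_binomial_def)
  then obtain ex where ex: "\<forall>B\<in>G. B = monom (fst (ex B)) - monom (snd (ex B))"
    by (rule bchoice[THEN exE])
  define U where "U = (\<lambda>B. exp_diff (fst (ex B)) (snd (ex B))) ` G"
  have "card U < toric_height A"
    unfolding U_def using card_image_le[OF assms(1)] assms(2) by (rule le_less_trans)
  then obtain d w :: "'n \<Rightarrow> int" where d: "\<And>u. u \<in> U \<Longrightarrow> (\<Sum>i\<in>UNIV. of_int (d i) * u i) = 0"
    and w: "\<And>j. (\<Sum>i\<in>UNIV. w i * A i j) = 0" "(\<Sum>i\<in>UNIV. d i * w i) \<noteq> 0"
    using exists_integral_separating_pair[of U A] assms(1) unfolding U_def by blast
  obtain m and A' :: "'n \<Rightarrow> nat \<Rightarrow> int" where bounded: "\<forall>i j. m \<le> j \<longrightarrow> A' i j = 0"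
    and fibers: "\<And>u v. cfg_deg A' u = cfg_deg A' v \<longleftrightarrow> cfg_deg A u = cfg_deg A v \<and> lin_form d u = lin_form d v"
    using nat_cfg_append_row[of A d] by metis
  have "G \<subseteq> toric_ideal A'"
  proof
    fix B assume "B \<in> G"
    define u v where "u = fst (ex B)" and "v = snd (ex B)"
    have B: "B = monom u - monom v" using ex \<open>B \<in> G\<close> by (simp add: u_def v_def)
    have "B \<in> toric_ideal A" using assms(3) \<open>B \<in> G\<close> by blast
    then have "cfg_deg A u = cfg_deg A v"
      by (simp add: B monom_diff_in_toric_ideal_iff)
    moreover have "lin_form d u = lin_form d v"
      using d[of "exp_diff u v"] \<open>B \<in> G\<close> by (simp add: U_def u_def v_def sum_mult_exp_diff)
    ultimately show "B \<in> toric_ideal A'"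
      by (simp add: B monom_diff_in_toric_ideal_iff fibers)
  qed
  moreover have "toric_ideal A' \<subseteq> toric_ideal A"
    by (rule toric_ideal_mono) (simp add: fibers)
  moreover have "toric_ideal A' \<noteq> toric_ideal A"
    using fibers w by (rule toric_ideal_append_row_neq)
  ultimately show ?thesis using bounded by blast
qed

theorem proposition2p3:
  fixes A :: "'n::finite \<Rightarrow> 'm::finite \<Rightarrow> int"
  assumes "pointed_cfg A"
    and "toric_height A \<ge> 2"
    and "stci_binomials A TYPE('k::field)"
  shows "radical_splittable (toric_ideal A :: ('n, 'k) mpoly set)"
proof -
  define I where "I = (toric_ideal A :: ('n, 'k) mpoly set)"
  obtain Bs where Bs: "length Bs = toric_height A" "\<forall>B\<in>set Bs. is_binomial B \<and> B \<in> I"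
    "I = rad (gen_ideal (set Bs))"
    using exists_binomial_list_at_bar[of A] assms(3) unfolding stci_binomials_def I_def by metis
  then obtain B\<^sub>1 Bs' where Bs_eq: "Bs = B\<^sub>1 # Bs'"
    using assms(2) by (cases Bs) auto
  obtain A\<^sub>1 :: "'n \<Rightarrow> nat \<Rightarrow> int" and m\<^sub>1 where A\<^sub>1: "\<forall>i j. m\<^sub>1 \<le> j \<longrightarrow> A\<^sub>1 i j = 0"
    "toric_ideal A\<^sub>1 \<subseteq> I" "toric_ideal A\<^sub>1 \<noteq> I" "B\<^sub>1 \<in> toric_ideal A\<^sub>1"
    using exists_proper_toric_subideal[of "{B\<^sub>1}" A] Bs(2) Bs_eq assms(2) unfolding I_def by auto
  have "card (set Bs') < toric_height A"
    using card_length[of Bs'] Bs(1) Bs_eq by simp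
  then obtain A\<^sub>2 :: "'n \<Rightarrow> nat \<Rightarrow> int" and m\<^sub>2 where A\<^sub>2: "\<forall>i j. m\<^sub>2 \<le> j \<longrightarrow> A\<^sub>2 i j = 0"
    "toric_ideal A\<^sub>2 \<subseteq> I" "toric_ideal A\<^sub>2 \<noteq> I" "set Bs' \<subseteq> toric_ideal A\<^sub>2"
    using exists_proper_toric_subideal[of "set Bs'" A] Bs(2) Bs_eq unfolding I_def by auto
  have "I = rad (ideal_sum (toric_ideal A\<^sub>1) (toric_ideal A\<^sub>2))"
  proof (rule radical_eq_rad_ideal_sum[OF is_ideal_toric_ideal is_ideal_toric_ideal _ A\<^sub>1(2) A\<^sub>2(2) _ Bs(3)])
    show "is_ideal I" "rad I = I"
      unfolding I_def by (rule is_ideal_toric_ideal, rule rad_toric_ideal)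
    show "set Bs \<subseteq> toric_ideal A\<^sub>1 \<union> toric_ideal A\<^sub>2"
      using A\<^sub>1(4) A\<^sub>2(4) Bs_eq by auto
  qed
  then show ?thesis
    using A\<^sub>1(1,3) A\<^sub>2(1,3) unfolding radical_splittable_def ideal_sum_def I_def by blast
qed

end
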